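(* For every nonnegative integer $r$, $$\sum_{n=1}^{\infty}\frac{n^2}{(2n+2r+1)(2n-1)^2(2n+1)}\frac{\binom{2n}{n}}{\binom{2n+2r}{n+r}}=\frac{1}{2^{2r+1}}\left(\frac{2\wp(2r+2)+\wp(2r)}{8}-\frac{1}{16(r+1)}\right),$$ where $\wp(q)=\int_0^{\pi/2} z\sin^q z\,\mathrm{d}z$. *)

theory Defs
  imports "HOL-Analysis.Analysis"
begin

definition wp :: "nat \<Rightarrow> real" where
  "wp q = integral {0..pi/2} (\<lambda>z. z * sin z ^ q)"

end

theory Submission
  imports Defs "HOL-Real_Asymp.Real_Asymp"
begin

(* Induction on r. Zeilberger's creative telescoping gives, for the summand t r n,
     t (r + 1) n = c r * t r n + G r (n + 1) - G r n,
   where G r n is a rational multiple of t r n with G r 1 = 0 and G r n -> L r;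
   hence the sums satisfy S (r + 1) = c r * S r + L r. Integration by parts gives
   wp (q + 2) = ((q + 1) wp q + 1/(q + 2)) / (q + 2), so the right-hand side obeys
   the same recursion. For r = 0, partial fractions split the series into the sum of
   1/(2n - 1)^2 = pi^2/8, a shift of it, and a telescoping sum. *)

lemma has_integral_wp: "((\<lambda>z. z * sin z ^ q) has_integral wp q) {0..pi/2}"
  unfolding wp_def by (intro integrable_integral integrable_continuous_interval continuous_intros)

lemma wp_0: "wp 0 = pi\<^sup>2 / 8"
proof -
  have "((\<lambda>z. z) has_integral (pi/2)\<^sup>2/2 - 0\<^sup>2/2) {0..pi/2}"
    by (rule fundamental_theorem_of_calculus)
       (auto intro!: derivative_eq_intros
             simp: has_real_derivative_iff_has_vector_derivative[symmetric])
  moreover have "((\<lambda>z. z) has_integral wp 0) {0..pi/2}"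
    using has_integral_wp[of 0] by simp
  ultimately have "(pi/2)\<^sup>2/2 - 0\<^sup>2/2 = wp 0"
    by (rule has_integral_unique)
  then show ?thesis
    by (simp add: power_divide)
qed

lemma wp_add_2: "wp (q + 2) = ((real q + 1) * wp q + 1 / (real q + 2)) / (real q + 2)"
proof -
  define f where
    "f z = (real q + 2) * (z * sin z ^ (q + 2)) - (real q + 1) * (z * sin z ^ q)" for z
  define F where "F z = sin z ^ Suc (Suc q) / (real q + 2) - z * sin z ^ Suc q * cos z" for z
  have "(F has_real_derivative f z) (at z)" for z
  proof -
    have "cos z * cos z = 1 - sin z * sin z"
      by (simp add: cos_squared_eq flip: power2_eq_square)
    then have cos_sq: "cos z * (cos z * y) = y - sin z * (sin z * y)" for y
      by (metis mult.assoc left_diff_distrib mult_1)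
    show ?thesis
      unfolding F_def f_def
      apply (rule DERIV_power_Suc derivative_eq_intros refl | simp)+
      apply (simp add: field_simps cos_sq)
      done
  qed
  then have "(f has_integral F (pi/2) - F 0) {0..pi/2}"
    by (intro fundamental_theorem_of_calculus)
       (auto simp: has_real_derivative_iff_has_vector_derivative[symmetric]
             intro: has_field_derivative_at_within)
  moreover have "(f has_integral (real q + 2) * wp (q + 2) - (real q + 1) * wp q) {0..pi/2}"
    unfolding f_def by (intro has_integral_diff has_integral_mult_right has_integral_wp)
  ultimately have "F (pi/2) - F 0 = (real q + 2) * wp (q + 2) - (real q + 1) * wp q"
    by (rule has_integral_unique)
  moreover have "F (pi/2) - F 0 = 1 / (real q + 2)"
    by (simp add: F_def)
  ultimately have "wp (q + 2) * (real q + 2) = (real q + 1) * wp q + 1 / (real q + 2)"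
    by (simp add: algebra_simps)
  then show ?thesis
    by (simp add: eq_divide_eq)
qed

lemma Suc_times_central_binomial_Suc:
  "Suc n * ((2 * Suc n) choose Suc n) = 2 * (2 * n + 1) * ((2 * n) choose n)"
proof -
  have "Suc n * ((2 * Suc n) choose Suc n) = 2 * (Suc n * ((2 * n + 1) choose n))"
    using Suc_times_binomial[of n "2 * n + 1"] by (simp del: binomial_Suc_Suc)
  also have "Suc n * ((2 * n + 1) choose n) = (2 * n + 1) * ((2 * n) choose n)"
    using binomial_absorb_comp[of "2 * n + 1" n] by (simp del: binomial_Suc_Suc)
  finally show ?thesis
    by simp
qed

lemma central_binomial_Suc:
  "real ((2 * Suc n) choose Suc n) = 2 * (2 * real n + 1) / (real n + 1) * real ((2 * n) choose n)"
  using arg_cong[OF Suc_times_central_binomial_Suc[of n], of real]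
  by (simp add: field_simps)

definition central_binom_ratio :: "nat \<Rightarrow> nat \<Rightarrow> real" where
  "central_binom_ratio n r = real ((2 * n) choose n) / real ((2 * n + 2 * r) choose (n + r))"

lemma central_binom_ratio_0 [simp]: "central_binom_ratio n 0 = 1"
  by (simp add: central_binom_ratio_def)

lemma central_binom_ratio_Suc_right:
  "central_binom_ratio n (Suc r) =
     (real n + real r + 1) / (2 * (2 * real n + 2 * real r + 1)) * central_binom_ratio n r"
proof -
  have index_eqs: "2 * n + 2 * Suc r = 2 * Suc (n + r)" "n + Suc r = Suc (n + r)"
    by simp_all
  show ?thesis
    unfolding central_binom_ratio_def index_eqs central_binomial_Suc
    by (simp add: field_simps del: binomial_Suc_Suc)
qed

lemma central_binom_ratio_Suc_left:
  "central_binom_ratio (Suc n) r =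
     (2 * real n + 1) * (real n + real r + 1) / ((real n + 1) * (2 * real n + 2 * real r + 1))
       * central_binom_ratio n r"
proof -
  have index_eqs: "2 * Suc n + 2 * r = 2 * Suc (n + r)" "Suc n + r = Suc (n + r)"
    by simp_all
  have "(2 * n + 2 * r) choose (n + r) \<noteq> 0"
    by simp
  then show ?thesis
    unfolding central_binom_ratio_def index_eqs central_binomial_Suc
    by (simp add: divide_simps del: binomial_Suc_Suc) (simp add: algebra_simps)
qed

lemma tendsto_central_binom_ratio: "(\<lambda>n. central_binom_ratio n r) \<longlonglongrightarrow> (1 / 4) ^ r"
proof (induction r)
  case 0
  then show ?case
    by simp
next
  case (Suc r)
  have "(\<lambda>n. (real n + real r + 1) / (2 * (2 * real n + 2 * real r + 1))) \<longlonglongrightarrow> 1 / 4"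
    by real_asymp
  from tendsto_mult[OF this Suc.IH] show ?case
    by (simp add: central_binom_ratio_Suc_right)
qed

definition summand :: "nat \<Rightarrow> nat \<Rightarrow> real" where
  "summand r n = real n ^ 2 / (real (2 * n + 2 * r + 1) * (2 * real n - 1) ^ 2 * real (2 * n + 1))
     * central_binom_ratio n r"

lemma summand_Suc_right:
  "summand (Suc r) n = (real n + real r + 1) / (2 * (2 * real n + 2 * real r + 3)) * summand r n"
proof -
  have "2 * real n + 2 * real r + 1 \<noteq> 0"
    by linarith
  then show ?thesis
    unfolding summand_def central_binom_ratio_Suc_right
    by (simp add: divide_simps) (simp add: algebra_simps)
qed

lemma summand_Suc_left:
  assumes "n \<ge> 1"
  shows "summand r (Suc n) =
    (real n + 1) * (real n + real r + 1) * (2 * real n - 1)\<^sup>2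
      / ((2 * real n + 2 * real r + 3) * (2 * real n + 3) * (real n)\<^sup>2) * summand r n"
proof -
  have "real n \<noteq> 0" "2 * real n - 1 \<noteq> 0" "2 * real n + 1 \<noteq> 0"
    "2 * real n + 2 * real r + 1 \<noteq> 0"
    using assms by auto
  then show ?thesis
    unfolding summand_def central_binom_ratio_Suc_left
    by (simp add: divide_simps) (simp add: algebra_simps power2_eq_square)
qed

definition zeilberger_coeff :: "nat \<Rightarrow> real" where
  "zeilberger_coeff r = (3 * real r + 5) * (2 * real r + 1) / (8 * (real r + 2) * (3 * real r + 2))"

definition zeilberger_certificate :: "nat \<Rightarrow> real \<Rightarrow> real" where
  "zeilberger_certificate r x =
     (x - 1) * ((3 * real r + 4) * x - (real r + 1)) * (2 * x + 1)
       / (8 * (real r + 2)\<^sup>2 * (3 * real r + 2) * x)"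

definition telescoping_limit :: "nat \<Rightarrow> real" where
  "telescoping_limit r = (3 * real r + 4) / (64 * (real r + 2)\<^sup>2 * (3 * real r + 2)) * (1 / 4) ^ r"

lemma zeilberger_identity:
  fixes x :: real
  assumes "x \<ge> 1"
  shows "(x + real r + 1) / (2 * (2 * x + 2 * real r + 3)) =
    zeilberger_coeff r
    + zeilberger_certificate r (x + 1)
        * ((x + 1) * (x + real r + 1) * (2 * x - 1)\<^sup>2
            / ((2 * x + 2 * real r + 3) * (2 * x + 3) * x\<^sup>2))
    - zeilberger_certificate r x"
proof -
  have "x \<noteq> 0" "x + 1 \<noteq> 0" "2 * x + 2 * real r + 3 \<noteq> 0" "2 * x + 3 \<noteq> 0"
    using assms by auto
  then show ?thesis
    unfolding zeilberger_coeff_def zeilberger_certificate_def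
    by (simp add: divide_simps) (simp add: algebra_simps power2_eq_square)
qed

lemma summand_Suc_telescoping:
  assumes "n \<ge> 1"
  shows "summand (Suc r) n = zeilberger_coeff r * summand r n
    + (zeilberger_certificate r (Suc n) * summand r (Suc n)
       - zeilberger_certificate r n * summand r n)"
proof -
  have x_ge_1: "real n \<ge> 1"
    using assms by simp
  have "summand (Suc r) n = (real n + real r + 1) / (2 * (2 * real n + 2 * real r + 3)) * summand r n"
    by (rule summand_Suc_right)
  also have "\<dots> = (zeilberger_coeff r
      + zeilberger_certificate r (real n + 1)
        * ((real n + 1) * (real n + real r + 1) * (2 * real n - 1)\<^sup>2
            / ((2 * real n + 2 * real r + 3) * (2 * real n + 3) * (real n)\<^sup>2))
      - zeilberger_certificate r n) * summand r n"
    by (simp only: zeilberger_identity[OF x_ge_1])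
  also have "\<dots> = zeilberger_coeff r * summand r n
    + (zeilberger_certificate r (Suc n) * summand r (Suc n)
       - zeilberger_certificate r n * summand r n)"
    using assms by (simp add: summand_Suc_left algebra_simps)
  finally show ?thesis .
qed

lemma zeilberger_certificate_1 [simp]: "zeilberger_certificate r 1 = 0"
  by (simp add: zeilberger_certificate_def)

lemma tendsto_zeilberger_certificate_summand:
  "(\<lambda>n. zeilberger_certificate r n * summand r n) \<longlonglongrightarrow> telescoping_limit r"
proof -
  define K where "K = 8 * (real r + 2)\<^sup>2 * (3 * real r + 2)"
  have "(\<lambda>n. (real n - 1) * ((3 * real r + 4) * real n - (real r + 1)) * (2 * real n + 1) / real n
      * (real n ^ 2 / (real (2 * n + 2 * r + 1) * (2 * real n - 1) ^ 2 * real (2 * n + 1))))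
      \<longlonglongrightarrow> (3 * real r + 4) / 8"
    by real_asymp
  from tendsto_mult[OF tendsto_mult[OF tendsto_const[of "1 / K"] this] tendsto_central_binom_ratio]
  show ?thesis
    by (simp add: K_def summand_def zeilberger_certificate_def telescoping_limit_def mult_ac)
qed

lemma sums_inverse_odd_squares: "(\<lambda>n. 1 / (2 * real n + 1)\<^sup>2) sums (pi\<^sup>2 / 8)"
proof -
  have squares: "(\<lambda>n. 1 / (real n + 1)\<^sup>2) sums (pi\<^sup>2 / 6)"
    using inverse_squares_sums by (simp add: add.commute)
  have "(\<lambda>n. \<Sum>k\<in>{n * 2..<n * 2 + 2}. 1 / (real k + 1)\<^sup>2) sums (pi\<^sup>2 / 6)"
    by (rule sums_group[OF squares]) simp
  moreover have "(\<Sum>k\<in>{n * 2..<n * 2 + 2}. 1 / (real k + 1)\<^sup>2) =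
      1 / (2 * real n + 1)\<^sup>2 + 1 / 4 * (1 / (real n + 1)\<^sup>2)" for n
  proof -
    have "{n * 2..<n * 2 + 2} = {2 * n, 2 * n + 1}"
      by auto
    then show ?thesis
      by (simp add: field_simps power2_eq_square)
  qed
  ultimately have "(\<lambda>n. 1 / (2 * real n + 1)\<^sup>2 + 1 / 4 * (1 / (real n + 1)\<^sup>2)) sums (pi\<^sup>2 / 6)"
    by simp
  from sums_diff[OF this sums_mult[OF squares, of "1 / 4"]] show ?thesis
    by simp
qed

lemma summand_0:
  assumes "n \<ge> 1"
  shows "summand 0 n =
    (1 / (2 * real n - 1)\<^sup>2 + 1 / (2 * real n + 1)\<^sup>2
      + (1 / (2 * real n - 1) - 1 / (2 * real n + 1))) / 16"
proof -
  have "2 * real n - 1 \<noteq> 0" "2 * real n + 1 \<noteq> 0"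
    using assms by auto
  then show ?thesis
    unfolding summand_def by (simp add: divide_simps) (simp add: algebra_simps power2_eq_square)
qed

lemma sums_summand_0: "(\<lambda>m. summand 0 (m + 1)) sums (pi\<^sup>2 / 64)"
proof -
  have odd_squares: "(\<lambda>m. 1 / (2 * real m + 1)\<^sup>2) sums (pi\<^sup>2 / 8)"
    by (rule sums_inverse_odd_squares)
  then have odd_shifted: "(\<lambda>m. 1 / (2 * real m + 3)\<^sup>2) sums (pi\<^sup>2 / 8 - 1)"
    using sums_Suc_iff[of "\<lambda>m. 1 / (2 * real m + 1)\<^sup>2"] by (simp add: algebra_simps)
  have "(\<lambda>m. 1 / (2 * real m + 1)) \<longlonglongrightarrow> 0"
    by real_asymp
  from telescope_sums'[OF this]
  have telescope: "(\<lambda>m. 1 / (2 * real m + 1) - 1 / (2 * real (Suc m) + 1)) sums 1"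
    by simp
  have summand_0_shifted: "summand 0 (m + 1) =
      (1 / (2 * real m + 1)\<^sup>2 + 1 / (2 * real m + 3)\<^sup>2
        + (1 / (2 * real m + 1) - 1 / (2 * real m + 3))) / 16" for m
    using summand_0[of "m + 1"] by (simp add: algebra_simps)
  have "(\<lambda>m. (1 / (2 * real m + 1)\<^sup>2 + 1 / (2 * real m + 3)\<^sup>2
        + (1 / (2 * real m + 1) - 1 / (2 * real m + 3))) / 16)
      sums ((pi\<^sup>2 / 8 + (pi\<^sup>2 / 8 - 1) + 1) / 16)"
    using telescope by (intro sums_divide sums_add odd_squares odd_shifted) (simp add: algebra_simps)
  then show ?thesis
    unfolding summand_0_shifted by simp
qed

definition series_value :: "nat \<Rightarrow> real" where
  "series_value r =
     1 / 2 ^ (2 * r + 1) * ((2 * wp (2 * r + 2) + wp (2 * r)) / 8 - 1 / (16 * real (r + 1)))"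

lemma series_value_0: "series_value 0 = pi\<^sup>2 / 64"
  using wp_add_2[of 0] by (simp add: series_value_def wp_0 field_simps)

lemma series_value_Suc:
  "series_value (Suc r) = zeilberger_coeff r * series_value r + telescoping_limit r"
proof -
  have wp_2r_2:
    "wp (2 * r + 2) = ((2 * real r + 1) * wp (2 * r) + 1 / (2 * real r + 2)) / (2 * real r + 2)"
    using wp_add_2[of "2 * r"] by simp
  have wp_2r_4:
    "wp (2 * Suc r + 2) = ((2 * real r + 3) * wp (2 * r + 2) + 1 / (2 * real r + 4)) / (2 * real r + 4)"
    using wp_add_2[of "2 * r + 2"] by (simp add: algebra_simps)
  have wp_2r_2': "wp (2 * Suc r) = wp (2 * r + 2)"
    by simp
  have quarter_power: "(1 / 4 :: real) ^ r = 2 / 2 ^ (2 * r + 1)"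
    by (simp add: power_mult power_divide)
  show ?thesis
    unfolding series_value_def zeilberger_coeff_def telescoping_limit_def quarter_power wp_2r_4 wp_2r_2' wp_2r_2
    by (simp add: divide_simps) (simp add: algebra_simps power2_eq_square)
qed

lemma sums_summand: "(\<lambda>m. summand r (m + 1)) sums series_value r"
proof (induction r)
  case 0
  show ?case
    using sums_summand_0 by (simp add: series_value_0)
next
  case (Suc r)
  define c where "c n = zeilberger_certificate r n * summand r n" for n
  have "(\<lambda>m. c (m + 1)) \<longlonglongrightarrow> telescoping_limit r"
    unfolding c_def using LIMSEQ_Suc[OF tendsto_zeilberger_certificate_summand] by simp
  from telescope_sums[OF this]
  have "(\<lambda>m. c (m + 2) - c (m + 1)) sums telescoping_limit r"
    by (simp add: c_def)
  from sums_add[OF sums_mult[OF Suc.IH, of "zeilberger_coeff r"] this] show ?case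
    by (simp add: summand_Suc_telescoping c_def series_value_Suc)
qed

theorem theorem5p0p3:
  fixes r :: nat
  shows "(\<lambda>m. let n = m + 1 in
            (real n ^ 2 / (real (2*n + 2*r + 1) * (2 * real n - 1) ^ 2 * real (2*n + 1)))
            * (real ((2*n) choose n) / real ((2*n + 2*r) choose (n + r))))
         sums (1 / 2 ^ (2*r + 1) * ((2 * wp (2*r + 2) + wp (2*r)) / 8 - 1 / (16 * real (r + 1))))"
  using sums_summand[of r] unfolding summand_def central_binom_ratio_def series_value_def Let_def .

end
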